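(* Let $F:\mathbb{R}^d\to\mathbb{R}^d$ be $L$-Lipschitz, $G:\mathbb{R}^d\rightrightarrows\mathbb{R}^d$ maximally monotone, the solution set of $0\in F(x)+G(x)$ nonempty, $F+G$ maximally $\rho$-cohypomonotone with $\rho>0$, and $\eta>\rho$. Let $\alpha=1-\frac\rho\eta$, $\beta_k=\frac1{k+2}$, $x^\star$ a solution, and suppose $(x_k)$ satisfies $x_{k+1}=\beta_kx_0+(1-\beta_k)((1-\alpha)x_k+\alpha\widetilde J_k)$ with $\|J_{\eta(F+G)}(x_k)-\widetilde J_k\|\le\varepsilon_k$ for some $\varepsilon_k>0$. Then for $k\ge0$, $$\|x_{k+1}-x^\star\|\le\|x_0-x^\star\|+\Big(1-\frac\rho\eta\Big)\frac1{k+2}\sum_{i=0}^k(i+1)\varepsilon_i.$$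
   Context: For an operator $A$, $J_A=(\mathrm{Id}+A)^{-1}$. $F+G$ is $\rho$-cohypomonotone if $\langle u-v,x-y\rangle\ge-\rho\|u-v\|^2$ for all $(x,u),(y,v)$ in its graph; maximal means its graph is not strictly contained in that of another $\rho$-cohypomonotone operator. *)

theory Defs
  imports "HOL-Analysis.Analysis"
begin

definition monotone_op :: "('a::real_inner \<Rightarrow> 'a set) \<Rightarrow> bool" where
  "monotone_op A \<longleftrightarrow> (\<forall>x y u v. u \<in> A x \<longrightarrow> v \<in> A y \<longrightarrow> inner (u - v) (x - y) \<ge> 0)"

definition max_monotone_op :: "('a::real_inner \<Rightarrow> 'a set) \<Rightarrow> bool" where
  "max_monotone_op A \<longleftrightarrow> monotone_op A \<and>
     (\<forall>B. monotone_op B \<longrightarrow> (\<forall>x. A x \<subseteq> B x) \<longrightarrow> B = A)"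

definition cohypomonotone :: "real \<Rightarrow> ('a::real_inner \<Rightarrow> 'a set) \<Rightarrow> bool" where
  "cohypomonotone \<rho> A \<longleftrightarrow>
     (\<forall>x y u v. u \<in> A x \<longrightarrow> v \<in> A y \<longrightarrow> inner (u - v) (x - y) \<ge> - \<rho> * (norm (u - v))\<^sup>2)"

definition max_cohypomonotone :: "real \<Rightarrow> ('a::real_inner \<Rightarrow> 'a set) \<Rightarrow> bool" where
  "max_cohypomonotone \<rho> A \<longleftrightarrow> cohypomonotone \<rho> A \<and>
     (\<forall>B. cohypomonotone \<rho> B \<longrightarrow> (\<forall>x. A x \<subseteq> B x) \<longrightarrow> B = A)"

definition sum_op :: "('a::real_vector \<Rightarrow> 'a) \<Rightarrow> ('a \<Rightarrow> 'a set) \<Rightarrow> 'a \<Rightarrow> 'a set" where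
  "sum_op F G x = (\<lambda>u. F x + u) ` G x"

text \<open>Resolvent J_{eta A} = (Id + eta A)^{-1}, as a set-valued map:
  p is in J x iff x is in p + eta A p.\<close>
definition resolvent :: "real \<Rightarrow> ('a::real_vector \<Rightarrow> 'a set) \<Rightarrow> 'a \<Rightarrow> 'a set" where
  "resolvent \<eta> A x = {p. x - p \<in> (\<lambda>u. \<eta> *\<^sub>R u) ` A p}"

end

theory Submission imports Defs begin

text \<open>At a zero \<open>x\<^sup>\<star>\<close> of \<open>A = F + G\<close>, \<open>\<rho>\<close>-cohypomonotonicity makes the relaxed resolvent
  \<open>(1 - \<alpha>) Id + \<alpha> J\<^sub>\<eta>\<^sub>A\<close> with \<open>\<alpha> = 1 - \<rho>/\<eta>\<close> quasi-nonexpansive: it does not increase the distance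
  to \<open>x\<^sup>\<star>\<close>. Hence one inexact Halpern step gives
  \<open>\<parallel>x\<^sub>k\<^sub>+\<^sub>1 - x\<^sup>\<star>\<parallel> \<le> \<beta>\<^sub>k \<parallel>x\<^sub>0 - x\<^sup>\<star>\<parallel> + (1 - \<beta>\<^sub>k)(\<parallel>x\<^sub>k - x\<^sup>\<star>\<parallel> + \<alpha> \<epsilon>\<^sub>k)\<close>, and with \<open>\<beta>\<^sub>k = 1/(k+2)\<close>
  multiplying by \<open>k + 2\<close> turns this into a telescoping bound for \<open>(k+1) \<parallel>x\<^sub>k - x\<^sup>\<star>\<parallel>\<close>.\<close>

lemma norm_relaxed_le:
  fixes a b :: "'a::real_inner"
  assumes "t \<le> 1" and "inner (a - b) b \<ge> - t * (norm (a - b))\<^sup>2"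
  shows "norm (t *\<^sub>R a + (1 - t) *\<^sub>R b) \<le> norm a"
proof -
  define c where "c = a - b"
  have comb_eq: "t *\<^sub>R a + (1 - t) *\<^sub>R b = b + t *\<^sub>R c"
    by (simp add: c_def algebra_simps)
  have cb: "inner c b \<ge> - t * inner c c"
    using assms(2) by (simp add: c_def power2_norm_eq_inner)
  have "(norm (b + c))\<^sup>2 - (norm (b + t *\<^sub>R c))\<^sup>2 = (1 - t) * (2 * inner c b + (1 + t) * inner c c)"
    unfolding power2_norm_eq_inner
    by (simp add: inner_add_left inner_add_right inner_commute algebra_simps)
  also have "\<dots> \<ge> 0"
  proof (rule mult_nonneg_nonneg)
    have "0 \<le> (1 - t) * inner c c"
      using assms(1) by simp
    then show "0 \<le> 2 * inner c b + (1 + t) * inner c c"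
      using cb by (simp add: algebra_simps)
  qed (use assms(1) in simp)
  finally have "(norm (b + t *\<^sub>R c))\<^sup>2 \<le> (norm (b + c))\<^sup>2" by simp
  then have "norm (b + t *\<^sub>R c) \<le> norm (b + c)"
    by (rule power2_le_imp_le) simp
  then show ?thesis
    by (simp add: comb_eq c_def)
qed

lemma relaxed_resolvent_quasi_nonexpansive:
  fixes A :: "'a::real_inner \<Rightarrow> 'a set"
  assumes "cohypomonotone \<rho> A" and "0 < \<eta>" and "\<rho> \<le> \<eta>"
    and "0 \<in> A z" and "p \<in> resolvent \<eta> A y"
  shows "norm ((\<rho> / \<eta>) *\<^sub>R (y - z) + (1 - \<rho> / \<eta>) *\<^sub>R (p - z)) \<le> norm (y - z)"
proof (rule norm_relaxed_le)
  show "\<rho> / \<eta> \<le> 1"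
    using assms(2,3) by simp
  obtain u where u: "u \<in> A p" and y_eq: "y - p = \<eta> *\<^sub>R u"
    using assms(5) unfolding resolvent_def by auto
  have "inner u (p - z) \<ge> - \<rho> * (norm u)\<^sup>2"
    using assms(1,4) u unfolding cohypomonotone_def by (metis diff_zero)
  then have "\<eta> * inner u (p - z) \<ge> \<eta> * (- \<rho> * (norm u)\<^sup>2)"
    using assms(2) by (intro mult_left_mono) auto
  moreover have "inner ((y - z) - (p - z)) (p - z) = \<eta> * inner u (p - z)"
    using y_eq by simp
  moreover have "- (\<rho> / \<eta>) * (norm ((y - z) - (p - z)))\<^sup>2 = \<eta> * (- \<rho> * (norm u)\<^sup>2)"
    using y_eq assms(2) by (simp add: power2_eq_square field_simps)
  ultimately show "inner ((y - z) - (p - z)) (p - z) \<ge> - (\<rho> / \<eta>) * (norm ((y - z) - (p - z)))\<^sup>2"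
    by simp
qed

lemma inexact_halpern_step:
  fixes A :: "'a::real_inner \<Rightarrow> 'a set"
  assumes "cohypomonotone \<rho> A" and "0 < \<eta>" and "\<rho> \<le> \<eta>" and "0 \<in> A z"
    and "p \<in> resolvent \<eta> A y" and "norm (p - J) \<le> e"
    and "0 \<le> \<beta>" and "\<beta> \<le> 1"
  shows "norm (\<beta> *\<^sub>R x0 + (1 - \<beta>) *\<^sub>R ((1 - (1 - \<rho> / \<eta>)) *\<^sub>R y + (1 - \<rho> / \<eta>) *\<^sub>R J) - z)
    \<le> \<beta> * norm (x0 - z) + (1 - \<beta>) * (norm (y - z) + (1 - \<rho> / \<eta>) * e)"
proof -
  define t where "t = \<rho> / \<eta>"
  define w where "w = t *\<^sub>R (y - z) + (1 - t) *\<^sub>R (p - z) + (1 - t) *\<^sub>R (J - p)"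
  have "norm (t *\<^sub>R (y - z) + (1 - t) *\<^sub>R (p - z)) \<le> norm (y - z)"
    unfolding t_def using assms(1-5) by (rule relaxed_resolvent_quasi_nonexpansive)
  moreover have "norm ((1 - t) *\<^sub>R (J - p)) \<le> (1 - t) * e"
    using assms(2,3,6) by (simp add: t_def norm_minus_commute mult_left_mono)
  ultimately have norm_w: "norm w \<le> norm (y - z) + (1 - t) * e"
    unfolding w_def by (rule order_trans[OF norm_triangle_ineq add_mono])
  have comb_eq: "\<beta> *\<^sub>R x0 + (1 - \<beta>) *\<^sub>R ((1 - (1 - t)) *\<^sub>R y + (1 - t) *\<^sub>R J) - z = \<beta> *\<^sub>R (x0 - z) + (1 - \<beta>) *\<^sub>R w"
    by (simp add: w_def algebra_simps)
  have "norm (\<beta> *\<^sub>R (x0 - z) + (1 - \<beta>) *\<^sub>R w) \<le> \<beta> * norm (x0 - z) + (1 - \<beta>) * norm w"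
    using assms(7,8) by (metis abs_of_nonneg diff_ge_0_iff_ge norm_scaleR norm_triangle_ineq)
  also have "\<dots> \<le> \<beta> * norm (x0 - z) + (1 - \<beta>) * (norm (y - z) + (1 - t) * e)"
    using assms(8) norm_w by (simp add: mult_left_mono)
  finally show ?thesis
    unfolding t_def[symmetric] comb_eq .
qed

lemma halpern_recursion_bound:
  fixes a e :: "nat \<Rightarrow> real"
  assumes "a 0 \<le> D"
    and "\<And>n. a (Suc n) \<le> (1 / (real n + 2)) * D + (1 - 1 / (real n + 2)) * (a n + e n)"
  shows "(real n + 1) * a n \<le> (real n + 1) * D + (\<Sum>i<n. (real i + 1) * e i)"
proof (induction n)
  case 0
  then show ?case using assms(1) by simp
next
  case (Suc n)
  have frac: "(real n + 2) * (1 - 1 / (real n + 2)) = real n + 1"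
    by (simp add: field_simps)
  have "(real n + 2) * a (Suc n)
      \<le> (real n + 2) * ((1 / (real n + 2)) * D + (1 - 1 / (real n + 2)) * (a n + e n))"
    using assms(2) by (intro mult_left_mono) auto
  also have "\<dots> = D + (real n + 1) * (a n + e n)"
    using frac by (simp add: distrib_left mult.assoc[symmetric])
  also have "\<dots> \<le> (real n + 2) * D + (\<Sum>i<Suc n. (real i + 1) * e i)"
    using Suc.IH by (simp add: algebra_simps)
  finally show ?case
    by (simp add: add.commute add.left_commute)
qed

theorem lemmaA2:
  fixes F :: "'a::euclidean_space \<Rightarrow> 'a" and G :: "'a \<Rightarrow> 'a set"
    and L \<rho> \<eta> :: real and xs :: 'a and x Jt :: "nat \<Rightarrow> 'a" and \<epsilon> :: "nat \<Rightarrow> real"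
  assumes lip: "L-lipschitz_on UNIV F"
    and G_mono: "max_monotone_op G"
    and sol_ne: "\<exists>z. 0 \<in> sum_op F G z"
    and cohypo: "max_cohypomonotone \<rho> (sum_op F G)"
    and rho_pos: "\<rho> > 0"
    and eta_gt: "\<eta> > \<rho>"
    and xs_sol: "0 \<in> sum_op F G xs"
    and eps_pos: "\<And>k. \<epsilon> k > 0"
    and approx: "\<And>k. \<exists>p \<in> resolvent \<eta> (sum_op F G) (x k). norm (p - Jt k) \<le> \<epsilon> k"
    and iter: "\<And>k. x (Suc k) = (1 / (real k + 2)) *\<^sub>R x 0
        + (1 - 1 / (real k + 2)) *\<^sub>R ((1 - (1 - \<rho> / \<eta>)) *\<^sub>R x k + (1 - \<rho> / \<eta>) *\<^sub>R Jt k)"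
  shows "norm (x (Suc k) - xs) \<le> norm (x 0 - xs)
      + (1 - \<rho> / \<eta>) * (1 / (real k + 2)) * (\<Sum>i = 0..k. (real i + 1) * \<epsilon> i)"
proof -
  define e where "e i = (1 - \<rho> / \<eta>) * \<epsilon> i" for i
  have cohypo_sum: "cohypomonotone \<rho> (sum_op F G)"
    using cohypo unfolding max_cohypomonotone_def by blast
  have step: "norm (x (Suc n) - xs)
      \<le> (1 / (real n + 2)) * norm (x 0 - xs) + (1 - 1 / (real n + 2)) * (norm (x n - xs) + e n)" for n
  proof -
    obtain p where "p \<in> resolvent \<eta> (sum_op F G) (x n)" and "norm (p - Jt n) \<le> \<epsilon> n"
      using approx by blast
    then show ?thesis
      unfolding iter e_def using cohypo_sum rho_pos eta_gt xs_sol
      by (intro inexact_halpern_step) auto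
  qed
  have "(real (Suc k) + 1) * norm (x (Suc k) - xs)
      \<le> (real (Suc k) + 1) * norm (x 0 - xs) + (\<Sum>i<Suc k. (real i + 1) * e i)"
    using order_refl step by (rule halpern_recursion_bound)
  moreover have "(\<Sum>i<Suc k. (real i + 1) * e i) = (1 - \<rho> / \<eta>) * (\<Sum>i = 0..k. (real i + 1) * \<epsilon> i)"
    by (simp add: e_def sum_distrib_left atLeast0AtMost lessThan_Suc_atMost ac_simps)
  ultimately show ?thesis
    by (simp add: field_simps)
qed

end
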